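(* Let $G$ be a periodic locally nilpotent group. If $G$ contains a finite contranormal subgroup, then the $\mathcal{F}$-perfect part $\mathcal{F}(G)$ of $G$ has finite index in $G$.
   Context: A subgroup $H$ of $G$ is contranormal in $G$ if its normal closure $H^G$ equals $G$. A group is $\mathcal{F}$-perfect if it has no proper subgroup of finite index. The $\mathcal{F}$-perfect part $\mathcal{F}(G)$ of $G$ is the subgroup generated by all $\mathcal{F}$-perfect subgroups of $G$; it is itself $\mathcal{F}$-perfect and is the largest $\mathcal{F}$-perfect subgroup of $G$. *)

theory Defs
  imports "HOL-Algebra.Algebra"
begin

definition comm_subgroup :: "('a, 'b) monoid_scheme \<Rightarrow> 'a set \<Rightarrow> 'a set \<Rightarrow> 'a set" where
  "comm_subgroup G H K = generate G {h \<otimes>\<^bsub>G\<^esub> k \<otimes>\<^bsub>G\<^esub> inv\<^bsub>G\<^esub> h \<otimes>\<^bsub>G\<^esub> inv\<^bsub>G\<^esub> k | h k. h \<in> H \<and> k \<in> K}"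

(* lower central series: gamma_1 = G (index 0 here), gamma_{i+1} = [gamma_i, G] *)
fun lower_central :: "('a, 'b) monoid_scheme \<Rightarrow> nat \<Rightarrow> 'a set" where
  "lower_central G 0 = carrier G"
| "lower_central G (Suc n) = comm_subgroup G (lower_central G n) (carrier G)"

definition nilpotent_group :: "('a, 'b) monoid_scheme \<Rightarrow> bool" where
  "nilpotent_group G \<longleftrightarrow> group G \<and> (\<exists>n. lower_central G n = {\<one>\<^bsub>G\<^esub>})"

definition locally_nilpotent :: "('a, 'b) monoid_scheme \<Rightarrow> bool" where
  "locally_nilpotent G \<longleftrightarrow> (\<forall>S. S \<subseteq> carrier G \<and> finite S \<longrightarrow> nilpotent_group (subgroup_generated G S))"

definition periodic_group :: "('a, 'b) monoid_scheme \<Rightarrow> bool" where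
  "periodic_group G \<longleftrightarrow> (\<forall>x \<in> carrier G. \<exists>n::nat. n > 0 \<and> x [^]\<^bsub>G\<^esub> n = \<one>\<^bsub>G\<^esub>)"

definition normal_closure :: "('a, 'b) monoid_scheme \<Rightarrow> 'a set \<Rightarrow> 'a set" where
  "normal_closure G H = generate G {g \<otimes>\<^bsub>G\<^esub> h \<otimes>\<^bsub>G\<^esub> inv\<^bsub>G\<^esub> g | g h. g \<in> carrier G \<and> h \<in> H}"

definition contranormal :: "('a, 'b) monoid_scheme \<Rightarrow> 'a set \<Rightarrow> bool" where
  "contranormal G H \<longleftrightarrow> subgroup H G \<and> normal_closure G H = carrier G"

definition finite_index_in :: "('a, 'b) monoid_scheme \<Rightarrow> 'a set \<Rightarrow> 'a set \<Rightarrow> bool" where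
  "finite_index_in G K H \<longleftrightarrow> finite {K #>\<^bsub>G\<^esub> h | h. h \<in> H}"

definition F_perfect :: "('a, 'b) monoid_scheme \<Rightarrow> 'a set \<Rightarrow> bool" where
  "F_perfect G H \<longleftrightarrow> subgroup H G \<and>
     (\<forall>K. subgroup K G \<and> K \<subseteq> H \<and> finite_index_in G K H \<longrightarrow> K = H)"

definition F_perfect_part :: "('a, 'b) monoid_scheme \<Rightarrow> 'a set" where
  "F_perfect_part G = generate G (\<Union>{H. F_perfect G H})"

end

(* Let N be a normal subgroup of finite index and T a finite transversal of N. The subgroup
   Q generated by T and H is nilpotent, and (N \<inter> Q)H, which corresponds to the image of H
   in G/N \<cong> Q/(N \<inter> Q), is contranormal in Q. A nilpotent group has no proper contranormal subgroup, because
   L\<gamma>\<^sub>k(G) is normal whenever L\<gamma>\<^sub>k\<^sub>-\<^sub>1(G) = G; hence (N \<inter> Q)H = Q and G = NH.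
   Now take N\<^sub>0 with |H \<inter> N\<^sub>0| minimal. For any such N, G = (N\<^sub>0 \<inter> N)H and
   H \<inter> N\<^sub>0 = H \<inter> N\<^sub>0 \<inter> N force N\<^sub>0 \<subseteq> N. So N\<^sub>0 is the least normal subgroup of finite
   index; it is F-perfect, since a subgroup of finite index in N\<^sub>0 contains its normal core,
   which has finite index in G. Thus N\<^sub>0 \<subseteq> F(G) has finite index. *)

theory Submission
  imports Defs
begin

lemma mem_set_mult_iff: "x \<in> A <#>\<^bsub>G\<^esub> B \<longleftrightarrow> (\<exists>a\<in>A. \<exists>b\<in>B. x = a \<otimes>\<^bsub>G\<^esub> b)"
  unfolding set_mult_def by blast

context group begin

lemma m_inv_cancel_left [simp]: "x \<in> carrier G \<Longrightarrow> z \<in> carrier G \<Longrightarrow> x \<otimes> (inv x \<otimes> z) = z"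
  by (simp add: m_assoc [symmetric])

lemma inv_m_cancel_left [simp]: "x \<in> carrier G \<Longrightarrow> z \<in> carrier G \<Longrightarrow> inv x \<otimes> (x \<otimes> z) = z"
  by (simp add: m_assoc [symmetric])

lemma set_mult_one_subset:
  assumes "\<one> \<in> B" "A \<subseteq> carrier G"
  shows "A \<subseteq> A <#> B"
proof
  fix a assume "a \<in> A"
  moreover have "a = a \<otimes> \<one>" using \<open>a \<in> A\<close> assms(2) by auto
  ultimately show "a \<in> A <#> B" using assms(1) unfolding mem_set_mult_iff by blast
qed

lemma one_set_mult_subset:
  assumes "\<one> \<in> A" "B \<subseteq> carrier G"
  shows "B \<subseteq> A <#> B"
proof
  fix b assume "b \<in> B"
  moreover have "b = \<one> \<otimes> b" using \<open>b \<in> B\<close> assms(2) by auto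
  ultimately show "b \<in> A <#> B" using assms(1) unfolding mem_set_mult_iff by blast
qed

lemma rcos_eq_iff:
  assumes "subgroup N G" "x \<in> carrier G" "y \<in> carrier G"
  shows "N #> x = N #> y \<longleftrightarrow> y \<otimes> inv x \<in> N"
proof
  assume "N #> x = N #> y"
  then have "y \<in> N #> x" using rcos_self[OF assms(3,1)] by simp
  then show "y \<otimes> inv x \<in> N" by (rule subgroup.rcos_module_imp[OF assms(1) is_group assms(2)])
next
  assume "y \<otimes> inv x \<in> N"
  then have "y \<in> N #> x" by (rule subgroup.rcos_module_rev[OF assms(1) is_group assms(2,3)])
  then show "N #> x = N #> y" using repr_independence[OF _ assms(2,1)] by blast
qed

lemma finite_index_if_finite_image:
  assumes M: "subgroup M G" and fin: "finite (\<phi> ` carrier G)"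
    and eq: "\<And>x y. x \<in> carrier G \<Longrightarrow> y \<in> carrier G \<Longrightarrow> \<phi> x = \<phi> y \<Longrightarrow> y \<otimes> inv x \<in> M"
  shows "finite_index_in G M (carrier G)"
proof -
  define r where "r = inv_into (carrier G) \<phi>"
  have "M #> h = M #> r (\<phi> h)" if h: "h \<in> carrier G" for h
  proof -
    have "r (\<phi> h) \<in> carrier G" "\<phi> (r (\<phi> h)) = \<phi> h"
      using h unfolding r_def by (auto intro: inv_into_into f_inv_into_f)
    with h show ?thesis using eq rcos_eq_iff[OF M] by metis
  qed
  then have "{M #> h | h. h \<in> carrier G} \<subseteq> (\<lambda>v. M #> r v) ` \<phi> ` carrier G"
    by blast
  then show ?thesis
    unfolding finite_index_in_def using fin finite_subset by blast
qed

lemma finite_index_imp_transversal: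
  assumes K: "subgroup K G" and H: "H \<subseteq> carrier G" and fin: "finite_index_in G K H"
  shows "\<exists>T. finite T \<and> T \<subseteq> H \<and> H \<subseteq> K <#> T"
proof (intro exI conjI)
  define r where "r = inv_into H (\<lambda>h. K #> h)"
  show "finite (r ` {K #> h | h. h \<in> H})"
    using fin unfolding finite_index_in_def by simp
  show "r ` {K #> h | h. h \<in> H} \<subseteq> H"
    unfolding r_def by (auto intro: inv_into_into)
  show "H \<subseteq> K <#> r ` {K #> h | h. h \<in> H}"
  proof
    fix h assume h: "h \<in> H"
    then have img: "K #> h \<in> (\<lambda>h. K #> h) ` H" by blast
    have "r (K #> h) \<in> H" "K #> r (K #> h) = K #> h"
      unfolding r_def using inv_into_into[OF img] f_inv_into_f[OF img] by simp_all
    then have "h \<otimes> inv (r (K #> h)) \<in> K"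
      using h H rcos_eq_iff[OF K] by blast
    moreover have "h = (h \<otimes> inv (r (K #> h))) \<otimes> r (K #> h)"
      using h H \<open>r (K #> h) \<in> H\<close> by (simp add: m_assoc subsetD)
    ultimately show "h \<in> K <#> r ` {K #> h | h. h \<in> H}"
      unfolding mem_set_mult_iff using h by blast
  qed
qed

lemma finite_index_if_finite_transversal:
  assumes K: "subgroup K G" and T: "finite T" "T \<subseteq> carrier G" "carrier G \<subseteq> K <#> T"
  shows "finite_index_in G K (carrier G)"
proof -
  have "K #> x \<in> (\<lambda>t. K #> t) ` T" if x: "x \<in> carrier G" for x
  proof -
    have "x \<in> K <#> T" using T(3) x by (rule subsetD)
    then obtain k t where kt: "k \<in> K" "t \<in> T" "x = k \<otimes> t"
      unfolding mem_set_mult_iff by blast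
    have "K #> x = (K #> k) #> t"
      using kt K T(2) by (simp add: coset_mult_assoc subgroup.subset subgroup.mem_carrier subsetD)
    also have "\<dots> = K #> t"
      using kt K by (simp add: subgroup.rcos_const[OF K is_group])
    finally have "K #> x = K #> t" .
    with kt show ?thesis by blast
  qed
  then have "{K #> h | h. h \<in> carrier G} \<subseteq> (\<lambda>t. K #> t) ` T" by blast
  then show ?thesis
    unfolding finite_index_in_def using T(1) finite_subset by blast
qed

lemma finite_index_carrier: "finite_index_in G (carrier G) (carrier G)"
  using finite_index_if_finite_transversal[OF subgroup_self, of "{\<one>}"]
    set_mult_one_subset[of "{\<one>}" "carrier G"] by simp

lemma finite_index_Int:
  assumes "subgroup A G" "subgroup B G"
    and "finite_index_in G A (carrier G)" "finite_index_in G B (carrier G)"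
  shows "finite_index_in G (A \<inter> B) (carrier G)"
proof (rule finite_index_if_finite_image[where \<phi> = "\<lambda>g. (A #> g, B #> g)"])
  show "subgroup (A \<inter> B) G" using assms subgroups_Inter_pair by blast
  have "(\<lambda>g. (A #> g, B #> g)) ` carrier G
      \<subseteq> {A #> h | h. h \<in> carrier G} \<times> {B #> h | h. h \<in> carrier G}"
    by blast
  then show "finite ((\<lambda>g. (A #> g, B #> g)) ` carrier G)"
    using assms(3,4) unfolding finite_index_in_def by (meson finite_SigmaI finite_subset)
qed (simp add: rcos_eq_iff[OF assms(1)] rcos_eq_iff[OF assms(2)])

lemma finite_index_mono:
  assumes A: "subgroup A G" and B: "subgroup B G" and "A \<subseteq> B"
    and fin: "finite_index_in G A (carrier G)"
  shows "finite_index_in G B (carrier G)"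
proof -
  obtain T where "finite T" "T \<subseteq> carrier G" "carrier G \<subseteq> A <#> T"
    using finite_index_imp_transversal[OF A _ fin] by blast
  moreover have "A <#> T \<subseteq> B <#> T" using \<open>A \<subseteq> B\<close> by (rule mono_set_mult) simp
  ultimately show ?thesis using finite_index_if_finite_transversal[OF B] by blast
qed

lemma finite_index_trans:
  assumes K: "subgroup K G" and N: "subgroup N G"
    and KN: "finite_index_in G K N" and NG: "finite_index_in G N (carrier G)"
  shows "finite_index_in G K (carrier G)"
proof -
  have Nc: "N \<subseteq> carrier G" and Kc: "K \<subseteq> carrier G" using K N subgroup.subset by auto
  obtain S where S: "finite S" "S \<subseteq> N" "N \<subseteq> K <#> S"
    using finite_index_imp_transversal[OF K Nc KN] by blast
  obtain T where T: "finite T" "T \<subseteq> carrier G" "carrier G \<subseteq> N <#> T"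
    using finite_index_imp_transversal[OF N _ NG] by blast
  have "carrier G \<subseteq> (K <#> S) <#> T"
    using T(3) mono_set_mult[OF S(3) order_refl] by (rule order_trans)
  also have "\<dots> = K <#> (S <#> T)"
    using Kc S(2) Nc T(2) by (intro set_mult_assoc) auto
  finally have "carrier G \<subseteq> K <#> (S <#> T)" .
  moreover have "finite (S <#> T)"
    unfolding set_mult_def using S(1) T(1) by (intro finite_UN_I) auto
  moreover have "S <#> T \<subseteq> carrier G"
    using S(2) Nc T(2) by (intro setmult_subset_G) auto
  ultimately show ?thesis
    using finite_index_if_finite_transversal[OF K] by blast
qed

end

definition normal_core :: "('a, 'b) monoid_scheme \<Rightarrow> 'a set \<Rightarrow> 'a set" where
  "normal_core G K = {g \<in> carrier G. \<forall>x\<in>carrier G. x \<otimes>\<^bsub>G\<^esub> g \<otimes>\<^bsub>G\<^esub> inv\<^bsub>G\<^esub> x \<in> K}"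

context group begin

lemma normal_core_subset: "normal_core G K \<subseteq> K"
  unfolding normal_core_def by (force dest: bspec[of _ _ \<one>])

lemma normal_core_normal:
  assumes K: "subgroup K G"
  shows "normal_core G K \<lhd> G"
proof -
  have sub: "subgroup (normal_core G K) G"
  proof (rule subgroupI)
    show "normal_core G K \<subseteq> carrier G" unfolding normal_core_def by blast
    show "normal_core G K \<noteq> {}"
      using subgroup.one_closed[OF K] unfolding normal_core_def by force
  next
    fix a assume a: "a \<in> normal_core G K"
    have "x \<otimes> inv a \<otimes> inv x = inv (x \<otimes> a \<otimes> inv x)" if "x \<in> carrier G" for x
      using a that unfolding normal_core_def by (simp add: inv_mult_group m_assoc)
    then show "inv a \<in> normal_core G K"
      using a subgroup.m_inv_closed[OF K] unfolding normal_core_def by auto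
  next
    fix a b assume ab: "a \<in> normal_core G K" "b \<in> normal_core G K"
    have "x \<otimes> (a \<otimes> b) \<otimes> inv x = (x \<otimes> a \<otimes> inv x) \<otimes> (x \<otimes> b \<otimes> inv x)" if "x \<in> carrier G" for x
      using ab that unfolding normal_core_def by (simp add: m_assoc)
    then show "a \<otimes> b \<in> normal_core G K"
      using ab subgroup.m_closed[OF K] unfolding normal_core_def by auto
  qed
  have "g \<otimes> n \<otimes> inv g \<in> normal_core G K" if "g \<in> carrier G" "n \<in> normal_core G K" for g n
  proof -
    have "x \<otimes> (g \<otimes> n \<otimes> inv g) \<otimes> inv x = (x \<otimes> g) \<otimes> n \<otimes> inv (x \<otimes> g)" if "x \<in> carrier G" for x
      using that \<open>g \<in> carrier G\<close> \<open>n \<in> normal_core G K\<close> unfolding normal_core_def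
      by (simp add: m_assoc inv_mult_group)
    then show ?thesis using that unfolding normal_core_def by auto
  qed
  with sub show ?thesis by (simp add: normal_inv_iff)
qed

lemma normal_core_finite_index:
  assumes K: "subgroup K G" and fin: "finite_index_in G K (carrier G)"
  shows "finite_index_in G (normal_core G K) (carrier G)"
proof -
  obtain T where T: "finite T" "T \<subseteq> carrier G" "carrier G \<subseteq> K <#> T"
    using finite_index_imp_transversal[OF K _ fin] by blast
  \<comment> \<open>\<open>\<phi> g\<close> records where right multiplication by \<open>g\<close> sends the cosets \<open>K t\<close>;
     it determines \<open>g\<close> modulo the core.\<close>
  define \<phi> where "\<phi> g = (\<lambda>t\<in>T. K #> (t \<otimes> g))" for g
  show ?thesis
  proof (rule finite_index_if_finite_image[where \<phi> = \<phi>])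
    show "subgroup (normal_core G K) G"
      using normal_core_normal[OF K] by (rule normal_imp_subgroup)
    have "\<phi> g \<in> PiE T (\<lambda>_. {K #> h | h. h \<in> carrier G})" if "g \<in> carrier G" for g
      unfolding \<phi>_def restrict_PiE_iff using T(2) that by blast
    then have "\<phi> ` carrier G \<subseteq> PiE T (\<lambda>_. {K #> h | h. h \<in> carrier G})" by blast
    then show "finite (\<phi> ` carrier G)"
      using T(1) fin unfolding finite_index_in_def by (meson finite_PiE finite_subset)
  next
    fix g g' assume g: "g \<in> carrier G" "g' \<in> carrier G" and "\<phi> g = \<phi> g'"
    then have conj_T: "t \<otimes> (g' \<otimes> inv g) \<otimes> inv t \<in> K" if t: "t \<in> T" for t
    proof -
      have tc: "t \<in> carrier G" using t T(2) by blast
      have "K #> (t \<otimes> g) = K #> (t \<otimes> g')"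
        using fun_cong[OF \<open>\<phi> g = \<phi> g'\<close>, of t] t unfolding \<phi>_def by simp
      then have "(t \<otimes> g') \<otimes> inv (t \<otimes> g) \<in> K" using rcos_eq_iff[OF K] tc g by simp
      then show ?thesis using tc g by (simp add: m_assoc inv_mult_group)
    qed
    have "x \<otimes> (g' \<otimes> inv g) \<otimes> inv x \<in> K" if x: "x \<in> carrier G" for x
    proof -
      have "x \<in> K <#> T" using T(3) x by (rule subsetD)
      then obtain k t where kt: "k \<in> K" "t \<in> T" "x = k \<otimes> t"
        unfolding mem_set_mult_iff by blast
      have kc: "k \<in> carrier G" using subgroup.mem_carrier[OF K kt(1)] .
      have tc: "t \<in> carrier G" using kt(2) T(2) by blast
      have "x \<otimes> (g' \<otimes> inv g) \<otimes> inv x = k \<otimes> (t \<otimes> (g' \<otimes> inv g) \<otimes> inv t) \<otimes> inv k"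
        using kt kc tc g by (simp add: m_assoc inv_mult_group)
      then show ?thesis
        using conj_T[OF kt(2)] kt(1) K by (simp add: subgroup.m_closed subgroup.m_inv_closed)
    qed
    then show "g' \<otimes> inv g \<in> normal_core G K"
      using g unfolding normal_core_def by simp
  qed
qed

lemma normal_closure_normal:
  assumes H: "H \<subseteq> carrier G"
  shows "normal_closure G H \<lhd> G"
proof -
  define S where "S = {g \<otimes> h \<otimes> inv g | g h. g \<in> carrier G \<and> h \<in> H}"
  have S: "S \<subseteq> carrier G" unfolding S_def using H by blast
  have conj_S: "g \<otimes> s \<otimes> inv g \<in> S" if "g \<in> carrier G" "s \<in> S" for g s
  proof -
    obtain x h where xh: "x \<in> carrier G" "h \<in> H" "s = x \<otimes> h \<otimes> inv x"
      using \<open>s \<in> S\<close> unfolding S_def by blast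
    then have "g \<otimes> s \<otimes> inv g = (g \<otimes> x) \<otimes> h \<otimes> inv (g \<otimes> x)"
      using that H by (auto simp: m_assoc inv_mult_group)
    then show ?thesis unfolding S_def using that xh by blast
  qed
  have "g \<otimes> y \<otimes> inv g \<in> generate G S" if g: "g \<in> carrier G" and "y \<in> generate G S" for g y
    using \<open>y \<in> generate G S\<close>
  proof induction
    case one
    then show ?case using g by (simp add: generate.one)
  next
    case (incl s)
    then show ?case using g conj_S by (blast intro: generate.incl)
  next
    case (inv s)
    have "g \<otimes> inv s \<otimes> inv g = inv (g \<otimes> s \<otimes> inv g)"
      using g inv S by (auto simp: m_assoc inv_mult_group)
    then show ?case using g inv conj_S by (simp add: generate.inv)
  next
    case (eng y1 y2)
    have "y1 \<in> carrier G" "y2 \<in> carrier G"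
      using eng.hyps generate_in_carrier[OF S] by auto
    then have "g \<otimes> (y1 \<otimes> y2) \<otimes> inv g = (g \<otimes> y1 \<otimes> inv g) \<otimes> (g \<otimes> y2 \<otimes> inv g)"
      using g by (simp add: m_assoc)
    then show ?case using eng.IH by (simp add: generate.eng)
  qed
  then show ?thesis
    unfolding normal_closure_def S_def[symmetric]
    using generate_is_subgroup[OF S] by (simp add: normal_inv_iff)
qed

lemma contranormal_iff:
  assumes L: "subgroup L G"
  shows "contranormal G L \<longleftrightarrow> (\<forall>M. M \<lhd> G \<and> L \<subseteq> M \<longrightarrow> M = carrier G)"
proof
  assume "contranormal G L"
  show "\<forall>M. M \<lhd> G \<and> L \<subseteq> M \<longrightarrow> M = carrier G"
  proof (intro allI impI)
    fix M assume M: "M \<lhd> G \<and> L \<subseteq> M"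
    then have "normal_closure G L \<subseteq> M"
      unfolding normal_closure_def
      by (intro generate_subgroup_incl) (auto intro: normal.inv_op_closed2 normal_imp_subgroup)
    then show "M = carrier G"
      using \<open>contranormal G L\<close> M normal_imp_subgroup subgroup.subset
      unfolding contranormal_def by blast
  qed
next
  assume min: "\<forall>M. M \<lhd> G \<and> L \<subseteq> M \<longrightarrow> M = carrier G"
  have Lc: "L \<subseteq> carrier G" using L by (rule subgroup.subset)
  have "l \<in> normal_closure G L" if "l \<in> L" for l
  proof -
    have "l = \<one> \<otimes> l \<otimes> inv \<one>" using that Lc by auto
    then show ?thesis
      unfolding normal_closure_def using that by (blast intro: generate.incl)
  qed
  then show "contranormal G L"
    using min normal_closure_normal[OF Lc] L unfolding contranormal_def by blast
qed

lemma comm_subgroup_subset: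
  assumes N: "N \<lhd> G"
  shows "comm_subgroup G N (carrier G) \<subseteq> N"
  unfolding comm_subgroup_def
proof (rule generate_subgroup_incl)
  show "subgroup N G" using N by (rule normal_imp_subgroup)
  have "h \<otimes> x \<otimes> inv h \<otimes> inv x \<in> N" if "h \<in> N" "x \<in> carrier G" for h x
  proof -
    have hc: "h \<in> carrier G" using that N normal_imp_subgroup subgroup.mem_carrier by metis
    have "h \<otimes> (x \<otimes> inv h \<otimes> inv x) \<in> N"
      using that N normal.inv_op_closed2[OF N] normal_imp_subgroup[OF N]
      by (simp add: subgroup.m_closed subgroup.m_inv_closed)
    then show ?thesis using hc that by (simp add: m_assoc)
  qed
  then show "{h \<otimes> k \<otimes> inv h \<otimes> inv k | h k. h \<in> N \<and> k \<in> carrier G} \<subseteq> N" by blast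
qed

lemma comm_subgroup_normal:
  assumes N: "N \<lhd> G"
  shows "comm_subgroup G N (carrier G) \<lhd> G"
proof -
  define C where "C = {h \<otimes> x \<otimes> inv h \<otimes> inv x | h x. h \<in> N \<and> x \<in> carrier G}"
  have Nc: "N \<subseteq> carrier G" using N normal_imp_subgroup subgroup.subset by metis
  have Cc: "C \<subseteq> carrier G" unfolding C_def using Nc by blast
  have gen: "comm_subgroup G N (carrier G) = generate G C"
    unfolding comm_subgroup_def C_def ..
  have sub: "subgroup (generate G C) G" using generate_is_subgroup[OF Cc] .
  have "q \<otimes> y \<otimes> inv q \<in> generate G C" if q: "q \<in> carrier G" and y: "y \<in> generate G C" for q y
  proof -
    have yN: "y \<in> N" using y comm_subgroup_subset[OF N] gen by blast
    with q have "y \<otimes> q \<otimes> inv y \<otimes> inv q \<in> generate G C"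
      unfolding C_def by (blast intro: generate.incl)
    then have "inv (y \<otimes> q \<otimes> inv y \<otimes> inv q) \<otimes> y \<in> generate G C"
      using sub y by (simp add: subgroup.m_inv_closed subgroup.m_closed)
    moreover have "inv (y \<otimes> q \<otimes> inv y \<otimes> inv q) \<otimes> y = q \<otimes> y \<otimes> inv q"
      using q yN Nc by (auto simp: inv_mult_group m_assoc)
    ultimately show ?thesis by simp
  qed
  then show ?thesis unfolding gen using sub by (simp add: normal_inv_iff)
qed

lemma lower_central_normal: "lower_central G k \<lhd> G"
  by (induction k) (simp_all add: normal_self comm_subgroup_normal)

lemma lower_central_Suc_mult_normal:
  assumes L: "subgroup L G" and IH: "lower_central G k <#> L = carrier G"
  shows "lower_central G (Suc k) <#> L \<lhd> G"
proof -
  have Lc: "L \<subseteq> carrier G" using L by (rule subgroup.subset)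
  define \<gamma> where "\<gamma> = lower_central G k"
  define \<delta> where "\<delta> = lower_central G (Suc k)"
  have \<gamma>: "\<gamma> \<lhd> G" and \<delta>: "\<delta> \<lhd> G" unfolding \<gamma>_def \<delta>_def by (rule lower_central_normal)+
  have \<gamma>c: "\<gamma> \<subseteq> carrier G" using subgroup.subset[OF normal_imp_subgroup[OF \<gamma>]] .
  have \<delta>c: "\<delta> \<subseteq> carrier G" using subgroup.subset[OF normal_imp_subgroup[OF \<delta>]] .
  define M where "M = \<delta> <#> L"
  have sM: "subgroup M G" unfolding M_def using mult_norm_subgroup[OF \<delta> L] .
  have LM: "L \<subseteq> M" unfolding M_def
    using subgroup.one_closed[OF normal_imp_subgroup[OF \<delta>]] Lc by (rule one_set_mult_subset)
  have \<delta>M: "\<delta> \<subseteq> M" unfolding M_def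
    using subgroup.one_closed[OF L] \<delta>c by (rule set_mult_one_subset)
  have "q \<otimes> y \<otimes> inv q \<in> M" if q: "q \<in> carrier G" and y: "y \<in> M" for q y
  proof -
    obtain c l where cl: "c \<in> \<delta>" "l \<in> L" "y = c \<otimes> l"
      using y unfolding M_def mem_set_mult_iff by blast
    have "q \<in> \<gamma> <#> L" using q IH unfolding \<gamma>_def by simp
    then obtain c' l' where cl': "c' \<in> \<gamma>" "l' \<in> L" "q = c' \<otimes> l'"
      unfolding mem_set_mult_iff by blast
    have car: "c \<in> carrier G" "l \<in> carrier G" "c' \<in> carrier G" "l' \<in> carrier G"
      using cl cl' Lc \<gamma>c \<delta>c by auto
    define m where "m = l' \<otimes> l \<otimes> inv l'"
    have mL: "m \<in> L" unfolding m_def using cl cl' L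
      by (simp add: subgroup.m_closed subgroup.m_inv_closed)
    have mc: "m \<in> carrier G" using mL Lc by blast
    have comm: "c' \<otimes> m \<otimes> inv c' \<otimes> inv m \<in> \<delta>"
      unfolding \<delta>_def using cl'(1) mc unfolding \<gamma>_def
      by (auto simp: comm_subgroup_def intro!: generate.incl)
    \<comment> \<open>conjugating by \<open>l'\<close> stays in \<open>L\<close>, conjugating by \<open>c'\<close> adds a commutator in \<open>\<delta>\<close>\<close>
    have "q \<otimes> y \<otimes> inv q = (q \<otimes> c \<otimes> inv q) \<otimes> (c' \<otimes> m \<otimes> inv c' \<otimes> inv m) \<otimes> m"
      unfolding cl(3) cl'(3) m_def using car by (simp add: m_assoc inv_mult_group)
    moreover have "q \<otimes> c \<otimes> inv q \<in> M" "c' \<otimes> m \<otimes> inv c' \<otimes> inv m \<in> M" "m \<in> M"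
      using normal.inv_op_closed2[OF \<delta> q cl(1)] comm mL LM \<delta>M by blast+
    ultimately show ?thesis using sM by (simp add: subgroup.m_closed)
  qed
  then show ?thesis using sM unfolding M_def \<delta>_def by (simp add: normal_inv_iff)
qed

lemma lower_central_mult_eq_carrier:
  assumes L: "contranormal G L"
  shows "lower_central G k <#> L = carrier G"
proof -
  have sL: "subgroup L G" using L unfolding contranormal_def by blast
  show ?thesis
  proof (induction k)
    case 0
    show ?case using set_mult_carrier_idem[OF sL] by simp
  next
    case (Suc k)
    have "L \<subseteq> lower_central G (Suc k) <#> L"
      using subgroup.one_closed[OF normal_imp_subgroup[OF lower_central_normal]]
        subgroup.subset[OF sL] by (rule one_set_mult_subset)
    then show ?case
      using L lower_central_Suc_mult_normal[OF sL Suc.IH] contranormal_iff[OF sL] by blast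
  qed
qed

lemma nilpotent_contranormal_eq_carrier:
  assumes "nilpotent_group G" and L: "contranormal G L"
  shows "L = carrier G"
proof -
  obtain n where "lower_central G n = {\<one>}"
    using assms(1) unfolding nilpotent_group_def by blast
  moreover have "L \<subseteq> carrier G"
    using L subgroup.subset unfolding contranormal_def by blast
  ultimately show ?thesis
    using lower_central_mult_eq_carrier[OF L, of n] by (simp add: set_mult_def subset_eq)
qed

lemma normal_restrict_supergroup_eq:
  assumes H: "contranormal G H" and N: "N \<lhd> G" and Q: "subgroup Q G"
    and NQ: "carrier G \<subseteq> N <#> Q"
    and M: "M \<lhd> G\<lparr>carrier := Q\<rparr>" and HM: "H \<subseteq> M" and NM: "N \<inter> Q \<subseteq> M"
  shows "M = Q"
proof -
  have Hc: "H \<subseteq> carrier G" using H subgroup.subset unfolding contranormal_def by blast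
  have Nc: "N \<subseteq> carrier G" using subgroup.subset[OF normal_imp_subgroup[OF N]] .
  have Qc: "Q \<subseteq> carrier G" using subgroup.subset[OF Q] .
  have sMQ: "subgroup M (G\<lparr>carrier := Q\<rparr>)" using M by (rule normal_imp_subgroup)
  have sM: "subgroup M G" using incl_subgroup[OF Q sMQ] .
  have MQ: "M \<subseteq> Q" using subgroup.subset[OF sMQ] by simp
  have conj_M: "q \<otimes> m \<otimes> inv q \<in> M" if "q \<in> Q" "m \<in> M" for q m
    using normal.inv_op_closed2[OF M, of q m] that Q by simp
  have sNM: "subgroup (N <#> M) G" using mult_norm_subgroup[OF N sM] .
  have conj_H: "x \<otimes> h \<otimes> inv x \<in> N <#> M" if x: "x \<in> carrier G" and h: "h \<in> H" for x h
  proof -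
    have "x \<in> N <#> Q" using NQ x by (rule subsetD)
    then obtain n t where nt: "n \<in> N" "t \<in> Q" "x = n \<otimes> t"
      unfolding mem_set_mult_iff by blast
    define y where "y = t \<otimes> h \<otimes> inv t"
    have yM: "y \<in> M" unfolding y_def using conj_M nt(2) h HM by blast
    have car: "n \<in> carrier G" "t \<in> carrier G" "h \<in> carrier G" "y \<in> carrier G"
      using nt h yM Nc Qc Hc MQ by auto
    have "y \<otimes> inv n \<otimes> inv y \<in> N"
      using normal.inv_op_closed2[OF N] car nt(1) normal_imp_subgroup[OF N]
      by (simp add: subgroup.m_inv_closed)
    with nt(1) have "n \<otimes> (y \<otimes> inv n \<otimes> inv y) \<in> N"
      by (rule subgroup.m_closed[OF normal_imp_subgroup[OF N]])
    moreover have "x \<otimes> h \<otimes> inv x = (n \<otimes> (y \<otimes> inv n \<otimes> inv y)) \<otimes> y"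
      unfolding nt(3) y_def using car by (simp add: m_assoc inv_mult_group)
    ultimately show ?thesis using yM unfolding mem_set_mult_iff by blast
  qed
  then have "normal_closure G H \<subseteq> N <#> M"
    unfolding normal_closure_def by (intro generate_subgroup_incl[OF _ sNM]) blast
  then have G_NM: "carrier G \<subseteq> N <#> M" using H unfolding contranormal_def by blast
  have "Q \<subseteq> M"
  proof
    fix q assume q: "q \<in> Q"
    then have "q \<in> N <#> M" using G_NM Qc by blast
    then obtain n m where nm: "n \<in> N" "m \<in> M" "q = n \<otimes> m"
      unfolding mem_set_mult_iff by blast
    have "m \<in> carrier G" using nm(2) MQ Qc by blast
    then have "n = q \<otimes> inv m" using nm Nc by (simp add: m_assoc subsetD)
    then have "n \<in> Q" using q nm(2) MQ Q by (simp add: subgroup.m_closed subgroup.m_inv_closed subsetD)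
    then have "n \<in> M" using nm(1) NM by blast
    then show "q \<in> M" using nm sM by (simp add: subgroup.m_closed)
  qed
  then show ?thesis using MQ by blast
qed

lemma contranormal_restrict_supergroup:
  assumes H: "contranormal G H" and N: "N \<lhd> G" and Q: "subgroup Q G"
    and HQ: "H \<subseteq> Q" and NQ: "carrier G \<subseteq> N <#> Q"
  shows "contranormal (G\<lparr>carrier := Q\<rparr>) ((N \<inter> Q) <#> H)"
proof -
  interpret Q: group "G\<lparr>carrier := Q\<rparr>" using Q by (rule subgroup_imp_group)
  have sH: "subgroup H G" using H unfolding contranormal_def by blast
  have "subgroup ((N \<inter> Q) <#>\<^bsub>G\<lparr>carrier := Q\<rparr>\<^esub> H) (G\<lparr>carrier := Q\<rparr>)"
    using normal_Int_subgroup[OF Q N] subgroup_incl[OF sH Q HQ] by (rule Q.mult_norm_subgroup)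
  then have sL: "subgroup ((N \<inter> Q) <#> H) (G\<lparr>carrier := Q\<rparr>)" by simp
  have NQ_L: "N \<inter> Q \<subseteq> (N \<inter> Q) <#> H"
    using subgroup.one_closed[OF sH] subgroup.subset[OF Q] by (intro set_mult_one_subset) auto
  have H_L: "H \<subseteq> (N \<inter> Q) <#> H"
    using subgroup.one_closed[OF normal_imp_subgroup[OF N]] subgroup.one_closed[OF Q]
      subgroup.subset[OF sH] by (intro one_set_mult_subset) auto
  show ?thesis
    unfolding Q.contranormal_iff[OF sL]
    using normal_restrict_supergroup_eq[OF H N Q NQ] H_L NQ_L by auto
qed

lemma normal_finite_index_mult_eq_carrier:
  assumes ln: "locally_nilpotent G" and fH: "finite H" and H: "contranormal G H"
    and N: "N \<lhd> G" and fN: "finite_index_in G N (carrier G)"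
  shows "N <#> H = carrier G"
proof -
  have Hc: "H \<subseteq> carrier G" using H subgroup.subset unfolding contranormal_def by blast
  have Nc: "N \<subseteq> carrier G" using subgroup.subset[OF normal_imp_subgroup[OF N]] .
  obtain T where T: "finite T" "T \<subseteq> carrier G" "carrier G \<subseteq> N <#> T"
    using finite_index_imp_transversal[OF normal_imp_subgroup[OF N] _ fN] by blast
  define Q where "Q = generate G (T \<union> H)"
  have TH: "T \<union> H \<subseteq> carrier G" using T(2) Hc by blast
  have Q: "subgroup Q G" unfolding Q_def using TH by (rule generate_is_subgroup)
  have THQ: "T \<union> H \<subseteq> Q" unfolding Q_def by (blast intro: generate.incl)
  have "subgroup_generated G (T \<union> H) = G\<lparr>carrier := Q\<rparr>"
    unfolding subgroup_generated_def Q_def using TH by (simp add: Int_absorb1)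
  then have nil: "nilpotent_group (G\<lparr>carrier := Q\<rparr>)"
    using ln TH T(1) fH unfolding locally_nilpotent_def by (metis finite_UnI)
  have "N <#> T \<subseteq> N <#> Q" using THQ by (intro mono_set_mult) auto
  with T(3) have NQ: "carrier G \<subseteq> N <#> Q" by (rule order_trans)
  have L: "(N \<inter> Q) <#> H = Q"
    using group.nilpotent_contranormal_eq_carrier[OF subgroup_imp_group[OF Q] nil
        contranormal_restrict_supergroup[OF H N Q _ NQ]] THQ by simp
  have "carrier G \<subseteq> N <#> ((N \<inter> Q) <#> H)" using NQ L by simp
  also have "\<dots> \<subseteq> N <#> (N <#> H)" by (intro mono_set_mult) auto
  also have "\<dots> = (N <#> N) <#> H" using Nc Hc by (simp add: set_mult_assoc)
  also have "\<dots> = N <#> H" using subgroup_mult_id[OF normal_imp_subgroup[OF N]] by simp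
  finally show ?thesis using setmult_subset_G[OF Nc Hc] by blast
qed

lemma ex_least_normal_finite_index:
  assumes fH: "finite H" and Hc: "H \<subseteq> carrier G"
    and mult: "\<And>N. N \<lhd> G \<Longrightarrow> finite_index_in G N (carrier G) \<Longrightarrow> N <#> H = carrier G"
  shows "\<exists>N\<^sub>0. N\<^sub>0 \<lhd> G \<and> finite_index_in G N\<^sub>0 (carrier G) \<and>
    (\<forall>N. N \<lhd> G \<and> finite_index_in G N (carrier G) \<longrightarrow> N\<^sub>0 \<subseteq> N)"
proof -
  define \<N> where "\<N> = {N. N \<lhd> G \<and> finite_index_in G N (carrier G)}"
  have "carrier G \<in> \<N>" unfolding \<N>_def using normal_self finite_index_carrier by blast
  then obtain N\<^sub>0 where N\<^sub>0: "N\<^sub>0 \<in> \<N>" and min: "\<And>N. N \<in> \<N> \<Longrightarrow> card (H \<inter> N\<^sub>0) \<le> card (H \<inter> N)"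
    using ex_has_least_nat[of "\<lambda>N. N \<in> \<N>" _ "\<lambda>N. card (H \<inter> N)"] by blast
  have "N\<^sub>0 \<subseteq> N" if N: "N \<in> \<N>" for N
  proof
    define M where "M = N\<^sub>0 \<inter> N"
    have M: "M \<in> \<N>" using N\<^sub>0 N unfolding \<N>_def M_def
      by (auto intro: normal_subgroup_intersect finite_index_Int normal_imp_subgroup)
    then have "card (H \<inter> N\<^sub>0) \<le> card (H \<inter> M)" by (rule min)
    then have HM: "H \<inter> M = H \<inter> N\<^sub>0"
      using fH unfolding M_def by (meson card_seteq finite_Int Int_mono order_refl Int_lower1)
    fix x assume x: "x \<in> N\<^sub>0"
    have sM: "subgroup M G" and sN\<^sub>0: "subgroup N\<^sub>0 G"
      using M N\<^sub>0 normal_imp_subgroup unfolding \<N>_def by blast+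
    have "M <#> H = carrier G" using M mult unfolding \<N>_def by blast
    then have "x \<in> M <#> H" using subgroup.mem_carrier[OF sN\<^sub>0 x] by simp
    then obtain m h where mh: "m \<in> M" "h \<in> H" "x = m \<otimes> h"
      unfolding mem_set_mult_iff by blast
    have mc: "m \<in> carrier G" using subgroup.mem_carrier[OF sM mh(1)] .
    have "h = inv m \<otimes> x" using mh mc Hc by (simp add: subsetD)
    moreover have "inv m \<otimes> x \<in> N\<^sub>0"
      using mh(1) x sN\<^sub>0 unfolding M_def by (simp add: subgroup.m_closed subgroup.m_inv_closed)
    ultimately have "h \<in> M" using HM mh(2) by blast
    then have "x \<in> M" using mh sM by (simp add: subgroup.m_closed)
    then show "x \<in> N" unfolding M_def by blast
  qed
  then show ?thesis using N\<^sub>0 unfolding \<N>_def by blast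
qed

lemma F_perfect_if_least_normal_finite_index:
  assumes N\<^sub>0: "N\<^sub>0 \<lhd> G" "finite_index_in G N\<^sub>0 (carrier G)"
    and least: "\<And>N. N \<lhd> G \<Longrightarrow> finite_index_in G N (carrier G) \<Longrightarrow> N\<^sub>0 \<subseteq> N"
  shows "F_perfect G N\<^sub>0"
  unfolding F_perfect_def
proof (intro conjI allI impI)
  show sN\<^sub>0: "subgroup N\<^sub>0 G" using N\<^sub>0(1) by (rule normal_imp_subgroup)
  fix K assume K: "subgroup K G \<and> K \<subseteq> N\<^sub>0 \<and> finite_index_in G K N\<^sub>0"
  then have "finite_index_in G K (carrier G)"
    using finite_index_trans[OF _ sN\<^sub>0 _ N\<^sub>0(2)] by blast
  then have "N\<^sub>0 \<subseteq> normal_core G K"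
    using K normal_core_normal normal_core_finite_index least by blast
  then show "K = N\<^sub>0" using K normal_core_subset by blast
qed

lemma finite_index_F_perfect_part:
  assumes N: "F_perfect G N" "finite_index_in G N (carrier G)"
  shows "finite_index_in G (F_perfect_part G) (carrier G)"
proof (rule finite_index_mono[OF _ _ _ N(2)])
  show sN: "subgroup N G" using N(1) unfolding F_perfect_def by blast
  have "\<Union>{H. F_perfect G H} \<subseteq> carrier G"
    unfolding F_perfect_def using subgroup.subset by blast
  then show "subgroup (F_perfect_part G) G"
    unfolding F_perfect_part_def by (rule generate_is_subgroup)
  show "N \<subseteq> F_perfect_part G"
    unfolding F_perfect_part_def using N(1) by (blast intro: generate.incl)
qed

end

theorem lemma3p3:
  fixes G (structure)
  assumes "group G"
    and "periodic_group G"
    and "locally_nilpotent G"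
    and "\<exists>H. finite H \<and> contranormal G H"
  shows "finite_index_in G (F_perfect_part G) (carrier G)"
proof -
  interpret group G by fact
  obtain H where fH: "finite H" and H: "contranormal G H" using assms(4) by blast
  have Hc: "H \<subseteq> carrier G" using H subgroup.subset unfolding contranormal_def by blast
  obtain N\<^sub>0 where N\<^sub>0: "N\<^sub>0 \<lhd> G" "finite_index_in G N\<^sub>0 (carrier G)"
    and least: "\<And>N. N \<lhd> G \<Longrightarrow> finite_index_in G N (carrier G) \<Longrightarrow> N\<^sub>0 \<subseteq> N"
    using ex_least_normal_finite_index[OF fH Hc
        normal_finite_index_mult_eq_carrier[OF assms(3) fH H]] by blast
  show ?thesis
    using finite_index_F_perfect_part[OF F_perfect_if_least_normal_finite_index[OF N\<^sub>0 least] N\<^sub>0(2)] .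
qed

end
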